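(* On $S^3$ with its standard pseudohermitian structure, let $\phi\in C^\infty(S^3)$ be complex with $|\phi|<1$, $F=(1-|\phi|^2)^{-1/2}$, and consider the CR structure spanned by $Z_{\bar1}^\phi=F(Z_{\bar1}+\phi Z_1)$ with the same contact form $\theta$ and coframe $\theta^1_\phi=F(\theta^1-\phi\theta^{\bar1})$. Then its connection form and torsion are $$\theta_1{}^1{}_\phi=\theta_1{}^1-F^{-1}dF-F^{-1}(B_{11}\theta^1+B_{12}\theta^{\bar1}+B_{13}\theta),\qquad A^1{}_{\bar1}{}^\phi=-F^2(\phi_0-4i\phi),$$ where $B_{11}=F^2(-2F_1-F\bar\phi_{\bar1}-\bar\phi F\phi_1-2\bar\phi F_{\bar1})$, $B_{12}=F^2(2|\phi|^2F_{\bar1}+F\phi_1+\phi F\bar\phi_{\bar1}+2\phi F_1)$, $B_{13}=-\bar\phi F^3(\phi_0-4i\phi)$.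
   Context: $S^3=\{|z_1|^2+|z_2|^2=1\}\subset\mathbb{C}^2$, $\theta=\frac{i}{2}(\bar\partial u-\partial u)|_{S^3}$ with $u=|z_1|^2+|z_2|^2-1$; $Z_1=\bar z_2\partial_{z_1}-\bar z_1\partial_{z_2}$, $Z_{\bar1}=\overline{Z_1}$, $\theta^1=z_2dz_1-z_1dz_2$ (so $d\theta=i\theta^1\wedge\theta^{\bar1}$), Reeb field $T=i\sum_j(z_j\partial_{z_j}-\bar z_j\partial_{\bar z_j})$, standard connection form $\theta_1{}^1=-2i\theta$, zero torsion. For a coframe $\{\theta,\vartheta^1,\vartheta^{\bar1}\}$ with $d\theta=i\vartheta^1\wedge\vartheta^{\bar1}$, the connection form $\vartheta_1{}^1$ and torsion $\tau^1=A^1{}_{\bar1}\vartheta^{\bar1}$ are determined by $d\vartheta^1=\vartheta^1\wedge\vartheta_1{}^1+\theta\wedge\tau^1$, $\tau^1\equiv0\bmod\vartheta^{\bar1}$, $\vartheta_1{}^1+\vartheta_{\bar1}{}^{\bar1}=0$. Notation: $\phi_1=Z_1\phi$, $\bar\phi_{\bar1}=Z_{\bar1}\bar\phi$, $F_1=Z_1F$, $F_{\bar1}=Z_{\bar1}F$, $\phi_0=T\phi$. *)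

theory Defs
  imports "HOL-Analysis.Analysis"
begin

text \<open>A complex tangent vector at a point is
  written in the basis d/dz1, d/dz2, d/dzbar1, d/dzbar2 as a quadruple (a1,a2,b1,b2).
  A complex 1-form is written by its coefficients with respect to dz1, dz2, dzbar1, dzbar2.\<close>

type_synonym pt = "complex \<times> complex"
type_synonym cvec = "complex \<times> complex \<times> complex \<times> complex"
type_synonym form1 = "pt \<Rightarrow> complex \<times> complex \<times> complex \<times> complex"
type_synonym form2 = "pt \<Rightarrow> cvec \<Rightarrow> cvec \<Rightarrow> complex"

coinductive smooth_on :: "'a::real_normed_vector set \<Rightarrow> ('a \<Rightarrow> 'b::real_normed_vector) \<Rightarrow> bool" where
  "f differentiable_on S \<Longrightarrow> (\<forall>h. smooth_on S (\<lambda>p. frechet_derivative f (at p) h))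
     \<Longrightarrow> smooth_on S f"

definition S3 :: "pt set" where
  "S3 = {(z1, z2). (cmod z1)\<^sup>2 + (cmod z2)\<^sup>2 = 1}"

definition u_fun :: "pt \<Rightarrow> complex" where
  "u_fun p = (case p of (z1, z2) \<Rightarrow> of_real ((cmod z1)\<^sup>2 + (cmod z2)\<^sup>2 - 1))"

definition dz1 :: "(pt \<Rightarrow> complex) \<Rightarrow> pt \<Rightarrow> complex" where
  "dz1 f p = (frechet_derivative f (at p) (1, 0) - \<i> * frechet_derivative f (at p) (\<i>, 0)) / 2"
definition dz2 :: "(pt \<Rightarrow> complex) \<Rightarrow> pt \<Rightarrow> complex" where
  "dz2 f p = (frechet_derivative f (at p) (0, 1) - \<i> * frechet_derivative f (at p) (0, \<i>)) / 2"
definition dzb1 :: "(pt \<Rightarrow> complex) \<Rightarrow> pt \<Rightarrow> complex" where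
  "dzb1 f p = (frechet_derivative f (at p) (1, 0) + \<i> * frechet_derivative f (at p) (\<i>, 0)) / 2"
definition dzb2 :: "(pt \<Rightarrow> complex) \<Rightarrow> pt \<Rightarrow> complex" where
  "dzb2 f p = (frechet_derivative f (at p) (0, 1) + \<i> * frechet_derivative f (at p) (0, \<i>)) / 2"

definition vapp :: "cvec \<Rightarrow> (pt \<Rightarrow> complex) \<Rightarrow> pt \<Rightarrow> complex" where
  "vapp v f p = (case v of (a1, a2, b1, b2) \<Rightarrow>
      a1 * dz1 f p + a2 * dz2 f p + b1 * dzb1 f p + b2 * dzb2 f p)"

definition vfield :: "(pt \<Rightarrow> cvec) \<Rightarrow> (pt \<Rightarrow> complex) \<Rightarrow> pt \<Rightarrow> complex" where
  "vfield X f p = vapp (X p) f p"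

definition pairing :: "complex \<times> complex \<times> complex \<times> complex \<Rightarrow> cvec \<Rightarrow> complex" where
  "pairing w v = (case w of (c1, c2, c3, c4) \<Rightarrow> case v of (a1, a2, b1, b2) \<Rightarrow>
      c1 * a1 + c2 * a2 + c3 * b1 + c4 * b2)"

definition fadd :: "form1 \<Rightarrow> form1 \<Rightarrow> form1" where
  "fadd w e p = (case w p of (a1, a2, a3, a4) \<Rightarrow> case e p of (b1, b2, b3, b4) \<Rightarrow>
      (a1 + b1, a2 + b2, a3 + b3, a4 + b4))"
definition fscale :: "(pt \<Rightarrow> complex) \<Rightarrow> form1 \<Rightarrow> form1" where
  "fscale f w p = (case w p of (a1, a2, a3, a4) \<Rightarrow> (f p * a1, f p * a2, f p * a3, f p * a4))"
definition fminus :: "form1 \<Rightarrow> form1 \<Rightarrow> form1" where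
  "fminus w e = fadd w (fscale (\<lambda>_. -1) e)"
definition fconj :: "form1 \<Rightarrow> form1" where
  "fconj w p = (case w p of (c1, c2, c3, c4) \<Rightarrow> (cnj c3, cnj c4, cnj c1, cnj c2))"

definition dfun :: "(pt \<Rightarrow> complex) \<Rightarrow> form1" where
  "dfun f p = (dz1 f p, dz2 f p, dzb1 f p, dzb2 f p)"
definition delf :: "(pt \<Rightarrow> complex) \<Rightarrow> form1" where
  "delf f p = (dz1 f p, dz2 f p, 0, 0)"
definition delbarf :: "(pt \<Rightarrow> complex) \<Rightarrow> form1" where
  "delbarf f p = (0, 0, dzb1 f p, dzb2 f p)"

text \<open>wedge product of 1-forms and exterior derivative of a 1-form
  (d(sum c_k dx_k) = sum dc_k wedge dx_k), as 2-forms evaluated on pairs of vectors\<close>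
definition wedge :: "form1 \<Rightarrow> form1 \<Rightarrow> form2" where
  "wedge w e p X Y = pairing (w p) X * pairing (e p) Y - pairing (w p) Y * pairing (e p) X"

definition comp1 :: "complex \<times> complex \<times> complex \<times> complex \<Rightarrow> complex" where
  "comp1 v = fst v"
definition comp2 :: "complex \<times> complex \<times> complex \<times> complex \<Rightarrow> complex" where
  "comp2 v = fst (snd v)"
definition comp3 :: "complex \<times> complex \<times> complex \<times> complex \<Rightarrow> complex" where
  "comp3 v = fst (snd (snd v))"
definition comp4 :: "complex \<times> complex \<times> complex \<times> complex \<Rightarrow> complex" where
  "comp4 v = snd (snd (snd v))"

definition extd :: "form1 \<Rightarrow> form2" where
  "extd w p X Y =
     (vapp X (\<lambda>q. comp1 (w q)) p * comp1 Y - vapp Y (\<lambda>q. comp1 (w q)) p * comp1 X)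
   + (vapp X (\<lambda>q. comp2 (w q)) p * comp2 Y - vapp Y (\<lambda>q. comp2 (w q)) p * comp2 X)
   + (vapp X (\<lambda>q. comp3 (w q)) p * comp3 Y - vapp Y (\<lambda>q. comp3 (w q)) p * comp3 X)
   + (vapp X (\<lambda>q. comp4 (w q)) p * comp4 Y - vapp Y (\<lambda>q. comp4 (w q)) p * comp4 X)"

definition f2add :: "form2 \<Rightarrow> form2 \<Rightarrow> form2" where
  "f2add a b p X Y = a p X Y + b p X Y"

text \<open>complexified tangent vectors to S3 at p: those annihilated by du\<close>
definition tangent :: "pt \<Rightarrow> cvec \<Rightarrow> bool" where
  "tangent p v \<longleftrightarrow> pairing (dfun u_fun p) v = 0"

text \<open>equality of (pullbacks of) forms on S3\<close>
definition eq1_S3 :: "form1 \<Rightarrow> form1 \<Rightarrow> bool" where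
  "eq1_S3 w e \<longleftrightarrow> (\<forall>p\<in>S3. \<forall>v. tangent p v \<longrightarrow> pairing (w p) v = pairing (e p) v)"
definition eq2_S3 :: "form2 \<Rightarrow> form2 \<Rightarrow> bool" where
  "eq2_S3 a b \<longleftrightarrow> (\<forall>p\<in>S3. \<forall>X Y. tangent p X \<longrightarrow> tangent p Y \<longrightarrow> a p X Y = b p X Y)"

definition theta :: form1 where
  "theta = fscale (\<lambda>_. \<i> / 2) (fminus (delbarf u_fun) (delf u_fun))"
definition theta1 :: form1 where
  "theta1 p = (case p of (z1, z2) \<Rightarrow> (z2, - z1, 0, 0))"
definition theta1bar :: form1 where
  "theta1bar = fconj theta1"
definition Z1 :: "pt \<Rightarrow> cvec" where
  "Z1 p = (case p of (z1, z2) \<Rightarrow> (cnj z2, - cnj z1, 0, 0))"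
definition Z1bar :: "pt \<Rightarrow> cvec" where
  "Z1bar p = (case p of (z1, z2) \<Rightarrow> (0, 0, z2, - z1))"
definition Treeb :: "pt \<Rightarrow> cvec" where
  "Treeb p = (case p of (z1, z2) \<Rightarrow> (\<i> * z1, \<i> * z2, - \<i> * cnj z1, - \<i> * cnj z2))"
definition conn_std :: form1 where
  "conn_std = fscale (\<lambda>_. -2 * \<i>) theta"

definition is_conn_torsion :: "form1 \<Rightarrow> form1 \<Rightarrow> (pt \<Rightarrow> complex) \<Rightarrow> bool" where
  "is_conn_torsion vt1 om A \<longleftrightarrow>
     eq2_S3 (extd vt1) (f2add (wedge vt1 om) (wedge theta (fscale A (fconj vt1)))) \<and>
     eq1_S3 (fadd om (fconj om)) (\<lambda>_. (0, 0, 0, 0))"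

end

theory Submission
  imports Defs
begin

text \<open>At each point of the sphere the vectors Z1, Z1bar, T span the complexified tangent space and
  are dual to theta1, theta1bar, theta.  Both sides of the structure equation are alternating
  bilinear on tangent vectors, so it suffices to compare them on the three pairs of frame vectors;
  there the claim becomes an identity between first derivatives of phi, which holds because
  F^2 (1 - |phi|^2) = 1 and dF = F^3 Re(conj phi d phi).  The same frame computation shows that
  om + conj om vanishes.  For uniqueness, the difference (d, a) of two solutions satisfies
  d(Z1bar) = - phi d(Z1), d(T) = - a conj phi, a = - phi d(T) and d(Z1) = - conj d(Z1bar), which
  forces d = 0 and a = 0 because |phi| < 1.\<close>

lemma pairing_fadd: "pairing (fadd w e p) v = pairing (w p) v + pairing (e p) v"
  by (cases "w p"; cases "e p"; cases v) (simp add: fadd_def pairing_def algebra_simps)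

lemma pairing_fscale: "pairing (fscale f w p) v = f p * pairing (w p) v"
  by (cases "w p"; cases v) (simp add: fscale_def pairing_def algebra_simps)

lemma pairing_fminus: "pairing (fminus w e p) v = pairing (w p) v - pairing (e p) v"
  by (simp add: fminus_def pairing_fadd pairing_fscale)

lemma pairing_zero: "pairing (0, 0, 0, 0) v = 0"
  by (cases v) (simp add: pairing_def)

definition vconj :: "cvec \<Rightarrow> cvec" where
  "vconj v = (case v of (a1, a2, b1, b2) \<Rightarrow> (cnj b1, cnj b2, cnj a1, cnj a2))"

lemma pairing_fconj: "pairing (fconj w p) v = cnj (pairing (w p) (vconj v))"
  by (cases "w p"; cases v) (simp add: fconj_def vconj_def pairing_def algebra_simps)

definition vcomb :: "complex \<Rightarrow> complex \<Rightarrow> complex \<Rightarrow> cvec \<Rightarrow> cvec \<Rightarrow> cvec \<Rightarrow> cvec" where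
  "vcomb x1 x2 x3 U V W =
     (case U of (u1, u2, u3, u4) \<Rightarrow> case V of (v1, v2, v3, v4) \<Rightarrow> case W of (w1, w2, w3, w4) \<Rightarrow>
       (x1 * u1 + x2 * v1 + x3 * w1, x1 * u2 + x2 * v2 + x3 * w2,
        x1 * u3 + x2 * v3 + x3 * w3, x1 * u4 + x2 * v4 + x3 * w4))"

lemma pairing_vcomb:
  "pairing w (vcomb x1 x2 x3 U V W) = x1 * pairing w U + x2 * pairing w V + x3 * pairing w W"
  by (cases w; cases U; cases V; cases W) (simp add: vcomb_def pairing_def algebra_simps)

definition covec_wedge :: "complex \<times> complex \<times> complex \<times> complex \<Rightarrow>
    complex \<times> complex \<times> complex \<times> complex \<Rightarrow> cvec \<Rightarrow> cvec \<Rightarrow> complex" where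
  "covec_wedge a b X Y = pairing a X * pairing b Y - pairing a Y * pairing b X"

text \<open>Only spans of three vectors are tested; this suffices because the complexified tangent
  space of the sphere is three-dimensional.\<close>

definition alternating_bilinear :: "(cvec \<Rightarrow> cvec \<Rightarrow> complex) \<Rightarrow> bool" where
  "alternating_bilinear L \<longleftrightarrow> (\<forall>x1 x2 x3 y1 y2 y3 U V W.
     L (vcomb x1 x2 x3 U V W) (vcomb y1 y2 y3 U V W) =
       (x1 * y2 - x2 * y1) * L U V + (x1 * y3 - x3 * y1) * L U W + (x2 * y3 - x3 * y2) * L V W)"

lemma alternating_bilinearD:
  "alternating_bilinear L \<Longrightarrow> L (vcomb x1 x2 x3 U V W) (vcomb y1 y2 y3 U V W) =
     (x1 * y2 - x2 * y1) * L U V + (x1 * y3 - x3 * y1) * L U W + (x2 * y3 - x3 * y2) * L V W"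
  unfolding alternating_bilinear_def by blast

lemma alternating_bilinear_covec_wedge: "alternating_bilinear (covec_wedge a b)"
  unfolding alternating_bilinear_def covec_wedge_def pairing_vcomb by (intro allI) algebra

lemma alternating_bilinear_add:
  assumes "alternating_bilinear L" "alternating_bilinear M"
  shows "alternating_bilinear (\<lambda>X Y. L X Y + M X Y)"
  unfolding alternating_bilinear_def
  by (simp add: alternating_bilinearD[OF assms(1)] alternating_bilinearD[OF assms(2)] algebra_simps)

definition e1 :: cvec where "e1 = (1, 0, 0, 0)"
definition e2 :: cvec where "e2 = (0, 1, 0, 0)"
definition e3 :: cvec where "e3 = (0, 0, 1, 0)"
definition e4 :: cvec where "e4 = (0, 0, 0, 1)"

lemma vapp_eq_pairing: "vapp v f p = pairing (dfun f p) v"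
  by (cases v) (simp add: vapp_def pairing_def dfun_def algebra_simps)

lemma vfield_eq_pairing: "vfield X f p = pairing (dfun f p) (X p)"
  by (simp add: vfield_def vapp_eq_pairing)

lemma extd_eq_covec_wedge: "extd w p X Y =
     covec_wedge (dfun (\<lambda>q. comp1 (w q)) p) e1 X Y + covec_wedge (dfun (\<lambda>q. comp2 (w q)) p) e2 X Y
   + covec_wedge (dfun (\<lambda>q. comp3 (w q)) p) e3 X Y + covec_wedge (dfun (\<lambda>q. comp4 (w q)) p) e4 X Y"
  by (cases X; cases Y)
    (simp add: extd_def covec_wedge_def vapp_eq_pairing e1_def e2_def e3_def e4_def pairing_def
      comp1_def comp2_def comp3_def comp4_def)

lemma alternating_bilinear_extd: "alternating_bilinear (extd w p)"
proof -
  have "extd w p = (\<lambda>X Y. (covec_wedge (dfun (\<lambda>q. comp1 (w q)) p) e1 X Y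
      + covec_wedge (dfun (\<lambda>q. comp2 (w q)) p) e2 X Y + covec_wedge (dfun (\<lambda>q. comp3 (w q)) p) e3 X Y)
      + covec_wedge (dfun (\<lambda>q. comp4 (w q)) p) e4 X Y)"
    by (simp add: fun_eq_iff extd_eq_covec_wedge)
  then show ?thesis by (simp only: alternating_bilinear_add alternating_bilinear_covec_wedge)
qed

lemma alternating_bilinear_wedge: "alternating_bilinear (wedge w e p)"
proof -
  have "wedge w e p = covec_wedge (w p) (e p)" by (simp add: fun_eq_iff wedge_def covec_wedge_def)
  then show ?thesis by (simp add: alternating_bilinear_covec_wedge)
qed

lemma alternating_bilinear_f2add:
  assumes "alternating_bilinear (a p)" "alternating_bilinear (b p)"
  shows "alternating_bilinear (f2add a b p)"
proof -
  have "f2add a b p = (\<lambda>X Y. a p X Y + b p X Y)" by (simp add: fun_eq_iff f2add_def)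
  with assms show ?thesis by (simp add: alternating_bilinear_add)
qed

definition wirtinger_covec :: "(pt \<Rightarrow> complex) \<Rightarrow> complex \<times> complex \<times> complex \<times> complex" where
  "wirtinger_covec f' =
     ((f' (1, 0) - \<i> * f' (\<i>, 0)) / 2, (f' (0, 1) - \<i> * f' (0, \<i>)) / 2,
      (f' (1, 0) + \<i> * f' (\<i>, 0)) / 2, (f' (0, 1) + \<i> * f' (0, \<i>)) / 2)"

lemma dfun_eq_wirtinger_covec: "(f has_derivative f') (at p) \<Longrightarrow> dfun f p = wirtinger_covec f'"
  by (drule frechet_derivative_at)
    (simp add: dfun_def wirtinger_covec_def dz1_def dz2_def dzb1_def dzb2_def)

lemma pairing_dfun_mult:
  assumes "f differentiable (at p)" "g differentiable (at p)"
  shows "pairing (dfun (\<lambda>q. f q * g q) p) v = f p * pairing (dfun g p) v + g p * pairing (dfun f p) v"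
proof -
  obtain f' g' where f: "(f has_derivative f') (at p)" and g: "(g has_derivative g') (at p)"
    using assms by (auto simp: differentiable_def)
  from dfun_eq_wirtinger_covec[OF has_derivative_mult[OF f g]]
    dfun_eq_wirtinger_covec[OF f] dfun_eq_wirtinger_covec[OF g]
  show ?thesis by (cases v) (simp add: wirtinger_covec_def pairing_def field_simps)
qed

lemma pairing_dfun_cnj:
  assumes "(f has_derivative f') (at p)"
  shows "pairing (dfun (\<lambda>q. cnj (f q)) p) v = cnj (pairing (dfun f p) (vconj v))"
  using dfun_eq_wirtinger_covec[OF has_derivative_cnj[OF assms]] dfun_eq_wirtinger_covec[OF assms]
  by (cases v) (simp add: wirtinger_covec_def pairing_def vconj_def field_simps)

lemma pairing_dfun_bounded_linear:
  assumes "bounded_linear g"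
  shows "pairing (dfun g p) v = (case v of (a1, a2, b1, b2) \<Rightarrow>
      a1 * (g (1, 0) - \<i> * g (\<i>, 0)) / 2 + a2 * (g (0, 1) - \<i> * g (0, \<i>)) / 2
    + b1 * (g (1, 0) + \<i> * g (\<i>, 0)) / 2 + b2 * (g (0, 1) + \<i> * g (0, \<i>)) / 2)"
  using dfun_eq_wirtinger_covec[OF bounded_linear_imp_has_derivative[OF assms]]
  by (cases v) (simp add: wirtinger_covec_def pairing_def field_simps)

lemma bounded_linear_coordinates:
  "bounded_linear (\<lambda>q::pt. snd q)" "bounded_linear (\<lambda>q::pt. - fst q)"
  "bounded_linear (\<lambda>q::pt. cnj (fst q))" "bounded_linear (\<lambda>q::pt. - cnj (snd q))"
  by (intro bounded_linear_minus bounded_linear_compose[OF bounded_linear_cnj]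
      bounded_linear_fst bounded_linear_snd)+

lemma pairing_dfun_coordinates:
  "pairing (dfun (\<lambda>q. snd q) p) v = fst (snd v)"
  "pairing (dfun (\<lambda>q. - fst q) p) v = - fst v"
  "pairing (dfun (\<lambda>q. cnj (fst q)) p) v = fst (snd (snd v))"
  "pairing (dfun (\<lambda>q. - cnj (snd q)) p) v = - snd (snd (snd v))"
  by (cases v; simp add: pairing_dfun_bounded_linear[OF bounded_linear_coordinates(1)]
      pairing_dfun_bounded_linear[OF bounded_linear_coordinates(2)]
      pairing_dfun_bounded_linear[OF bounded_linear_coordinates(3)]
      pairing_dfun_bounded_linear[OF bounded_linear_coordinates(4)] field_simps)+

lemma smooth_on_has_derivative:
  assumes "smooth_on U f" "open U" "p \<in> U"
  shows "(f has_derivative frechet_derivative f (at p)) (at p)"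
proof -
  from assms(1) have "f differentiable_on U" by (cases rule: smooth_on.cases) auto
  then have "f differentiable (at p)" using assms(2,3) differentiable_onD at_within_open by metis
  then show ?thesis using frechet_derivative_works by blast
qed

section \<open>The standard structure on the sphere\<close>

lemma S3_cnj_eq: "(z1, z2) \<in> S3 \<Longrightarrow> z1 * cnj z1 + z2 * cnj z2 = 1"
  by (metis (mono_tags, lifting) S3_def case_prod_conv complex_norm_square mem_Collect_eq
      of_real_1 of_real_add)

lemma dfun_u_fun: "dfun u_fun (z1, z2) = (cnj z1, cnj z2, z1, z2)"
proof -
  have u_fun_eq: "u_fun = (\<lambda>q. fst q * cnj (fst q) + snd q * cnj (snd q) - 1)"
    by (auto simp: fun_eq_iff u_fun_def complex_norm_square[symmetric])
  have "(u_fun has_derivative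
      (\<lambda>h. fst h * cnj z1 + z1 * cnj (fst h) + (snd h * cnj z2 + z2 * cnj (snd h)))) (at (z1, z2))"
    unfolding u_fun_eq
    by (rule has_derivative_eq_rhs, (rule derivative_intros)+) (auto simp: fun_eq_iff algebra_simps)
  from dfun_eq_wirtinger_covec[OF this] show ?thesis
    by (simp add: wirtinger_covec_def field_simps)
qed

lemma tangent_iff: "tangent (z1, z2) v \<longleftrightarrow> pairing (cnj z1, cnj z2, z1, z2) v = 0"
  by (simp add: tangent_def dfun_u_fun)

lemma theta_eq: "theta (z1, z2) = (- \<i> / 2 * cnj z1, - \<i> / 2 * cnj z2, \<i> / 2 * z1, \<i> / 2 * z2)"
  using dfun_u_fun[of z1 z2]
  by (simp add: theta_def fscale_def fminus_def fadd_def delf_def delbarf_def dfun_def)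

lemma tangent_frame:
  "tangent (z1, z2) (Z1 (z1, z2))" "tangent (z1, z2) (Z1bar (z1, z2))"
  "tangent (z1, z2) (Treeb (z1, z2))"
  by (simp_all add: tangent_iff Z1_def Z1bar_def Treeb_def pairing_def algebra_simps)

lemma vconj_frame:
  "vconj (Z1 (z1, z2)) = Z1bar (z1, z2)" "vconj (Z1bar (z1, z2)) = Z1 (z1, z2)"
  "vconj (Treeb (z1, z2)) = Treeb (z1, z2)"
  by (simp_all add: vconj_def Z1_def Z1bar_def Treeb_def)

lemma coframe_dual_frame:
  assumes "z1 * cnj z1 + z2 * cnj z2 = 1"
  shows "pairing (theta1 (z1, z2)) (Z1 (z1, z2)) = 1" "pairing (theta1 (z1, z2)) (Z1bar (z1, z2)) = 0"
    "pairing (theta1 (z1, z2)) (Treeb (z1, z2)) = 0" "pairing (theta1bar (z1, z2)) (Z1 (z1, z2)) = 0"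
    "pairing (theta1bar (z1, z2)) (Z1bar (z1, z2)) = 1" "pairing (theta1bar (z1, z2)) (Treeb (z1, z2)) = 0"
    "pairing (theta (z1, z2)) (Z1 (z1, z2)) = 0" "pairing (theta (z1, z2)) (Z1bar (z1, z2)) = 0"
    "pairing (theta (z1, z2)) (Treeb (z1, z2)) = 1"
  using assms
  by (simp add: theta1_def theta1bar_def fconj_def theta_eq Z1_def Z1bar_def Treeb_def
      pairing_def field_simps; algebra?)+

lemma tangent_frame_decomp:
  assumes S: "z1 * cnj z1 + z2 * cnj z2 = 1" and T: "tangent (z1, z2) X"
  shows "X = vcomb (pairing (theta1 (z1, z2)) X) (pairing (theta1bar (z1, z2)) X)
               (pairing (theta (z1, z2)) X) (Z1 (z1, z2)) (Z1bar (z1, z2)) (Treeb (z1, z2))"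
proof -
  obtain a b c d where X: "X = (a, b, c, d)" by (cases X) auto
  have t: "cnj z1 * a + cnj z2 * b + z1 * c + z2 * d = 0" using T by (simp add: tangent_iff X pairing_def)
  show ?thesis unfolding X
    apply (simp add: vcomb_def theta_eq theta1bar_def theta1_def fconj_def Z1_def Z1bar_def
        Treeb_def pairing_def)
    using S t by (intro conjI; simp add: field_simps; algebra)
qed

lemma eq1_S3_frameI:
  assumes "\<And>z1 z2 E. (z1, z2) \<in> S3 \<Longrightarrow> E \<in> {Z1 (z1, z2), Z1bar (z1, z2), Treeb (z1, z2)} \<Longrightarrow>
             pairing (w (z1, z2)) E = pairing (e (z1, z2)) E"
  shows "eq1_S3 w e"
  unfolding eq1_S3_def
proof (intro ballI allI impI)
  fix p X assume p: "p \<in> S3" and X: "tangent p X"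
  obtain z1 z2 where pz: "p = (z1, z2)" by (cases p)
  with p tangent_frame_decomp[OF S3_cnj_eq X[unfolded pz]] show "pairing (w p) X = pairing (e p) X"
    by (metis assms insertCI pairing_vcomb)
qed

lemma eq2_S3_frameI:
  assumes "\<And>p. alternating_bilinear (a p)" "\<And>p. alternating_bilinear (b p)"
    and "\<And>z1 z2. (z1, z2) \<in> S3 \<Longrightarrow> a (z1, z2) (Z1 (z1, z2)) (Z1bar (z1, z2)) = b (z1, z2) (Z1 (z1, z2)) (Z1bar (z1, z2))"
    and "\<And>z1 z2. (z1, z2) \<in> S3 \<Longrightarrow> a (z1, z2) (Z1 (z1, z2)) (Treeb (z1, z2)) = b (z1, z2) (Z1 (z1, z2)) (Treeb (z1, z2))"
    and "\<And>z1 z2. (z1, z2) \<in> S3 \<Longrightarrow> a (z1, z2) (Z1bar (z1, z2)) (Treeb (z1, z2)) = b (z1, z2) (Z1bar (z1, z2)) (Treeb (z1, z2))"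
  shows "eq2_S3 a b"
  unfolding eq2_S3_def
proof (intro ballI allI impI)
  fix p X Y assume p: "p \<in> S3" and X: "tangent p X" and Y: "tangent p Y"
  obtain z1 z2 where pz: "p = (z1, z2)" by (cases p)
  with p have S: "z1 * cnj z1 + z2 * cnj z2 = 1" using S3_cnj_eq by blast
  obtain x1 x2 x3 where X: "X = vcomb x1 x2 x3 (Z1 (z1, z2)) (Z1bar (z1, z2)) (Treeb (z1, z2))"
    using tangent_frame_decomp[OF S X[unfolded pz]] by blast
  obtain y1 y2 y3 where Y: "Y = vcomb y1 y2 y3 (Z1 (z1, z2)) (Z1bar (z1, z2)) (Treeb (z1, z2))"
    using tangent_frame_decomp[OF S Y[unfolded pz]] by blast
  show "a p X Y = b p X Y"
    using p unfolding pz X Y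
    by (simp add: alternating_bilinearD[OF assms(1)] alternating_bilinearD[OF assms(2)] assms(3-5))
qed

lemma eq1_S3_frameD:
  assumes "eq1_S3 w e" "(z1, z2) \<in> S3"
  shows "pairing (w (z1, z2)) (Z1 (z1, z2)) = pairing (e (z1, z2)) (Z1 (z1, z2))"
    "pairing (w (z1, z2)) (Z1bar (z1, z2)) = pairing (e (z1, z2)) (Z1bar (z1, z2))"
    "pairing (w (z1, z2)) (Treeb (z1, z2)) = pairing (e (z1, z2)) (Treeb (z1, z2))"
  using assms tangent_frame unfolding eq1_S3_def by blast+

lemma eq2_S3_frameD:
  assumes "eq2_S3 a b" "(z1, z2) \<in> S3"
  shows "a (z1, z2) (Z1 (z1, z2)) (Z1bar (z1, z2)) = b (z1, z2) (Z1 (z1, z2)) (Z1bar (z1, z2))"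
    "a (z1, z2) (Z1 (z1, z2)) (Treeb (z1, z2)) = b (z1, z2) (Z1 (z1, z2)) (Treeb (z1, z2))"
    "a (z1, z2) (Z1bar (z1, z2)) (Treeb (z1, z2)) = b (z1, z2) (Z1bar (z1, z2)) (Treeb (z1, z2))"
  using assms tangent_frame unfolding eq2_S3_def by blast+

section \<open>Coframes of the deformed structure\<close>

lemma extd_deformed_coframe:
  assumes dF: "F differentiable (at (z1, z2))" and d\<phi>: "\<phi> differentiable (at (z1, z2))"
  shows "extd (fscale F (fminus theta1 (fscale \<phi> theta1bar))) (z1, z2) X Y =
     (F (z1, z2) * fst (snd X) + z2 * pairing (dfun F (z1, z2)) X) * fst Y
   - (F (z1, z2) * fst (snd Y) + z2 * pairing (dfun F (z1, z2)) Y) * fst X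
   + ((F (z1, z2) * (- fst X) + (- z1) * pairing (dfun F (z1, z2)) X) * fst (snd Y)
   - (F (z1, z2) * (- fst Y) + (- z1) * pairing (dfun F (z1, z2)) Y) * fst (snd X))
   + ((F (z1, z2) * (\<phi> (z1, z2) * (- snd (snd (snd X))) + (- cnj z2) * pairing (dfun \<phi> (z1, z2)) X)
        + \<phi> (z1, z2) * (- cnj z2) * pairing (dfun F (z1, z2)) X) * fst (snd (snd Y))
   - (F (z1, z2) * (\<phi> (z1, z2) * (- snd (snd (snd Y))) + (- cnj z2) * pairing (dfun \<phi> (z1, z2)) Y)
        + \<phi> (z1, z2) * (- cnj z2) * pairing (dfun F (z1, z2)) Y) * fst (snd (snd X)))
   + ((F (z1, z2) * (\<phi> (z1, z2) * fst (snd (snd X)) + cnj z1 * pairing (dfun \<phi> (z1, z2)) X)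
        + \<phi> (z1, z2) * cnj z1 * pairing (dfun F (z1, z2)) X) * snd (snd (snd Y))
   - (F (z1, z2) * (\<phi> (z1, z2) * fst (snd (snd Y)) + cnj z1 * pairing (dfun \<phi> (z1, z2)) Y)
        + \<phi> (z1, z2) * cnj z1 * pairing (dfun F (z1, z2)) Y) * snd (snd (snd X)))"
proof -
  have coordinates_differentiable:
    "(\<lambda>q::pt. snd q) differentiable (at (z1, z2))" "(\<lambda>q::pt. - fst q) differentiable (at (z1, z2))"
    "(\<lambda>q::pt. cnj (fst q)) differentiable (at (z1, z2))"
    "(\<lambda>q::pt. - cnj (snd q)) differentiable (at (z1, z2))"
    using bounded_linear_coordinates by (simp_all add: bounded_linear_imp_differentiable)
  note products_differentiable =
    differentiable_mult[OF d\<phi> coordinates_differentiable(4)]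
    differentiable_mult[OF d\<phi> coordinates_differentiable(3)]
  have components:
    "(\<lambda>q. comp1 (fscale F (fminus theta1 (fscale \<phi> theta1bar)) q)) = (\<lambda>q. F q * snd q)"
    "(\<lambda>q. comp2 (fscale F (fminus theta1 (fscale \<phi> theta1bar)) q)) = (\<lambda>q. F q * (- fst q))"
    "(\<lambda>q. comp3 (fscale F (fminus theta1 (fscale \<phi> theta1bar)) q)) = (\<lambda>q. F q * (\<phi> q * (- cnj (snd q))))"
    "(\<lambda>q. comp4 (fscale F (fminus theta1 (fscale \<phi> theta1bar)) q)) = (\<lambda>q. F q * (\<phi> q * cnj (fst q)))"
    by (auto simp: fun_eq_iff fscale_def fminus_def fadd_def theta1_def theta1bar_def fconj_def
        comp1_def comp2_def comp3_def comp4_def)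
  show ?thesis
    unfolding extd_eq_covec_wedge components covec_wedge_def
      pairing_dfun_mult[OF dF coordinates_differentiable(1)] pairing_dfun_mult[OF dF coordinates_differentiable(2)]
      pairing_dfun_mult[OF dF products_differentiable(1)] pairing_dfun_mult[OF dF products_differentiable(2)]
      pairing_dfun_mult[OF d\<phi> coordinates_differentiable(4)] pairing_dfun_mult[OF d\<phi> coordinates_differentiable(3)]
      pairing_dfun_coordinates
    by (cases X; cases Y) (simp add: e1_def e2_def e3_def e4_def pairing_def)
qed

lemma structure_rhs_frame:
  fixes F \<phi> A :: "pt \<Rightarrow> complex" and om :: form1
  assumes "z1 * cnj z1 + z2 * cnj z2 = 1"
  defines "vt \<equiv> fscale F (fminus theta1 (fscale \<phi> theta1bar))"
  defines "R \<equiv> f2add (wedge vt om) (wedge theta (fscale A (fconj vt)))"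
  defines "p \<equiv> (z1, z2)"
  shows "R p (Z1 p) (Z1bar p) = F p * pairing (om p) (Z1bar p) + F p * \<phi> p * pairing (om p) (Z1 p)"
    "R p (Z1 p) (Treeb p) = F p * pairing (om p) (Treeb p) + A p * cnj (F p) * cnj (\<phi> p)"
    "R p (Z1bar p) (Treeb p) = - (F p * \<phi> p * pairing (om p) (Treeb p)) - A p * cnj (F p)"
  unfolding R_def f2add_def wedge_def vt_def p_def
  by (simp_all add: pairing_fminus pairing_fscale pairing_fconj vconj_frame
      coframe_dual_frame[OF assms(1)] algebra_simps)

lemma connection_torsion_difference_eq_zero:
  fixes c d1 d2 d3 a :: complex
  assumes c: "cmod c < 1"
    and "d2 + c * d1 = 0" "d3 + a * cnj c = 0" "c * d3 + a = 0" "d1 + cnj d2 = 0"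
  shows "d1 = 0 \<and> d2 = 0 \<and> d3 = 0 \<and> a = 0"
proof -
  have "c * cnj c \<noteq> 1"
  proof
    assume "c * cnj c = 1"
    then have "cmod c ^ 2 = 1" by (metis complex_norm_square of_real_eq_1_iff)
    with c show False by (simp add: abs_square_eq_1)
  qed
  moreover have "a * (1 - c * cnj c) = 0" using assms(3,4) by algebra
  ultimately have a: "a = 0" by simp
  have "d2 = - (c * d1)" using assms(2) by (simp add: eq_neg_iff_add_eq_0)
  then have "d1 = cnj c * cnj d1" using assms(5) by (simp add: eq_neg_iff_add_eq_0[symmetric])
  then have "cmod d1 = cmod c * cmod d1" by (metis complex_mod_cnj norm_mult)
  then have "d1 = 0" using c by (metis mult_cancel_right1 norm_eq_zero order_less_irrefl)
  with a assms(2,3) show ?thesis by simp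
qed

lemma is_conn_torsion_unique:
  fixes F \<phi> :: "pt \<Rightarrow> complex"
  defines "vt \<equiv> fscale F (fminus theta1 (fscale \<phi> theta1bar))"
  assumes F_real: "\<And>p. p \<in> S3 \<Longrightarrow> cnj (F p) = F p" and F_nonzero: "\<And>p. p \<in> S3 \<Longrightarrow> F p \<noteq> 0"
    and small: "\<And>p. p \<in> S3 \<Longrightarrow> cmod (\<phi> p) < 1"
    and "is_conn_torsion vt om A" "is_conn_torsion vt om' A'"
  shows "eq1_S3 om' om \<and> (\<forall>p\<in>S3. A' p = A p)"
proof -
  from assms(5,6) have structure_eqs:
      "eq2_S3 (extd vt) (f2add (wedge vt om) (wedge theta (fscale A (fconj vt))))"
      "eq2_S3 (extd vt) (f2add (wedge vt om') (wedge theta (fscale A' (fconj vt))))"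
    and reality: "eq1_S3 (fadd om (fconj om)) (\<lambda>_. (0, 0, 0, 0))"
      "eq1_S3 (fadd om' (fconj om')) (\<lambda>_. (0, 0, 0, 0))"
    unfolding is_conn_torsion_def by blast+
  have frame_eq: "pairing (om' (z1, z2)) (Z1 (z1, z2)) = pairing (om (z1, z2)) (Z1 (z1, z2)) \<and>
      pairing (om' (z1, z2)) (Z1bar (z1, z2)) = pairing (om (z1, z2)) (Z1bar (z1, z2)) \<and>
      pairing (om' (z1, z2)) (Treeb (z1, z2)) = pairing (om (z1, z2)) (Treeb (z1, z2)) \<and>
      A' (z1, z2) = A (z1, z2)"
    if p: "(z1, z2) \<in> S3" for z1 z2
  proof -
    let ?p = "(z1, z2)"
    note rhs = structure_rhs_frame[OF S3_cnj_eq[OF p], of F \<phi>, folded vt_def]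
    note frame_values = eq2_S3_frameD[OF structure_eqs(1) p] eq2_S3_frameD[OF structure_eqs(2) p]
    define d1 where "d1 = pairing (om' ?p) (Z1 ?p) - pairing (om ?p) (Z1 ?p)"
    define d2 where "d2 = pairing (om' ?p) (Z1bar ?p) - pairing (om ?p) (Z1bar ?p)"
    define d3 where "d3 = pairing (om' ?p) (Treeb ?p) - pairing (om ?p) (Treeb ?p)"
    define a where "a = A' ?p - A ?p"
    have "F ?p * (d2 + \<phi> ?p * d1) = 0"
      using frame_values(1,4) unfolding rhs d1_def d2_def by (simp add: algebra_simps)
    then have Z1_Z1bar: "d2 + \<phi> ?p * d1 = 0" using F_nonzero[OF p] by simp
    have "F ?p * (d3 + a * cnj (\<phi> ?p)) = 0"
      using frame_values(2,5) F_real[OF p] unfolding rhs d3_def a_def by (simp add: algebra_simps)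
    then have Z1_T: "d3 + a * cnj (\<phi> ?p) = 0" using F_nonzero[OF p] by simp
    have "F ?p * (\<phi> ?p * d3 + a) = 0"
      using frame_values(3,6) F_real[OF p] unfolding rhs d3_def a_def by (simp add: algebra_simps)
    then have Z1bar_T: "\<phi> ?p * d3 + a = 0" using F_nonzero[OF p] by simp
    have real: "d1 + cnj d2 = 0"
    proof -
      have "pairing (om ?p) (Z1 ?p) + cnj (pairing (om ?p) (Z1bar ?p)) = 0"
        "pairing (om' ?p) (Z1 ?p) + cnj (pairing (om' ?p) (Z1bar ?p)) = 0"
        using eq1_S3_frameD(1)[OF reality(1) p] eq1_S3_frameD(1)[OF reality(2) p]
        unfolding pairing_fadd pairing_fconj vconj_frame pairing_zero .
      moreover have "d1 + cnj d2 = (pairing (om' ?p) (Z1 ?p) + cnj (pairing (om' ?p) (Z1bar ?p)))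
          - (pairing (om ?p) (Z1 ?p) + cnj (pairing (om ?p) (Z1bar ?p)))"
        unfolding d1_def d2_def complex_cnj_diff by (simp add: algebra_simps)
      ultimately show ?thesis by simp
    qed
    from connection_torsion_difference_eq_zero[OF small[OF p] Z1_Z1bar Z1_T Z1bar_T real]
    show ?thesis unfolding d1_def d2_def d3_def a_def by simp
  qed
  then have "eq1_S3 om' om" by (intro eq1_S3_frameI) auto
  moreover have "\<forall>p\<in>S3. A' p = A p" using frame_eq by auto
  ultimately show ?thesis ..
qed

section \<open>The explicit connection form and torsion\<close>

lemma powr_neg_half_squared: "0 < (r::real) \<Longrightarrow> (r powr (-1/2))\<^sup>2 = 1 / r"
  by (simp add: power2_eq_square powr_add[symmetric] powr_minus_divide)

lemma has_derivative_inverse_sqrt_one_minus_cmod_sq: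
  fixes \<phi> :: "pt \<Rightarrow> complex"
  assumes D: "(\<phi> has_derivative D) (at p)" and small: "cmod (\<phi> p) < 1"
  defines "K \<equiv> (1 - (cmod (\<phi> p))\<^sup>2) powr (-1/2)"
  shows "((\<lambda>p. complex_of_real ((1 - (cmod (\<phi> p))\<^sup>2) powr (-1/2))) has_derivative
          (\<lambda>h. of_real (K ^ 3) * (cnj (\<phi> p) * D h + \<phi> p * cnj (D h)) / 2)) (at p)"
proof -
  define r where "r = 1 - (cmod (\<phi> p))\<^sup>2"
  have r_pos: "0 < r" unfolding r_def using small by (simp add: abs_square_less_1)
  have "((\<lambda>q. 1 - ((Re (\<phi> q))\<^sup>2 + (Im (\<phi> q))\<^sup>2)) has_derivative
       (\<lambda>h. - (2 * Re (\<phi> p) * Re (D h) + 2 * Im (\<phi> p) * Im (D h)))) (at p)"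
    by (rule has_derivative_eq_rhs, (rule derivative_intros D)+) (auto simp: fun_eq_iff power2_eq_square)
  then have "((\<lambda>q. 1 - (cmod (\<phi> q))\<^sup>2) has_derivative
       (\<lambda>h. - (2 * Re (\<phi> p) * Re (D h) + 2 * Im (\<phi> p) * Im (D h)))) (at p)"
    by (simp add: cmod_power2)
  from has_derivative_powr[OF this has_derivative_const[of "-1/2"]] r_pos
  have powr_derivative: "((\<lambda>q. (1 - (cmod (\<phi> q))\<^sup>2) powr (-1/2)) has_derivative
       (\<lambda>h. K * (- (2 * Re (\<phi> p) * Re (D h) + 2 * Im (\<phi> p) * Im (D h))) * (-1/2) / r)) (at p)"
    unfolding r_def K_def by simp
  have K_cube: "K ^ 3 = K / r"
    using powr_neg_half_squared[OF r_pos] unfolding K_def r_def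
    by (simp add: power3_eq_cube power2_eq_square field_simps)
  have "(\<lambda>h. K * (- (2 * Re (\<phi> p) * Re (D h) + 2 * Im (\<phi> p) * Im (D h))) * (-1/2) / r) =
      (\<lambda>h. K ^ 3 * (Re (\<phi> p) * Re (D h) + Im (\<phi> p) * Im (D h)))"
    unfolding K_cube using r_pos by (simp add: fun_eq_iff field_simps)
  with powr_derivative have "((\<lambda>q. (1 - (cmod (\<phi> q))\<^sup>2) powr (-1/2)) has_derivative
       (\<lambda>h. K ^ 3 * (Re (\<phi> p) * Re (D h) + Im (\<phi> p) * Im (D h)))) (at p)"
    by simp
  from has_derivative_of_real[OF this] show ?thesis
    by (rule has_derivative_eq_rhs) (simp add: fun_eq_iff complex_eq_iff)
qed

locale deformed_structure =
  fixes \<phi> F \<phi>1 \<phi>b1 F1 Fb1 \<phi>0 B11 B12 B13 A :: "pt \<Rightarrow> complex" and vt1 om :: form1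
  assumes phi_differentiable: "\<And>p. p \<in> S3 \<Longrightarrow> \<phi> differentiable (at p)"
    and small: "\<And>p. p \<in> S3 \<Longrightarrow> cmod (\<phi> p) < 1"
    and F_def: "F = (\<lambda>p. complex_of_real ((1 - (cmod (\<phi> p))\<^sup>2) powr (-1/2)))"
    and vt1_def: "vt1 = fscale F (fminus theta1 (fscale \<phi> theta1bar))"
    and \<phi>1_def: "\<phi>1 = vfield Z1 \<phi>" and \<phi>b1_def: "\<phi>b1 = vfield Z1bar (\<lambda>p. cnj (\<phi> p))"
    and F1_def: "F1 = vfield Z1 F" and Fb1_def: "Fb1 = vfield Z1bar F" and \<phi>0_def: "\<phi>0 = vfield Treeb \<phi>"
    and B11_def: "B11 = (\<lambda>p. (F p)\<^sup>2 * (- 2 * F1 p - F p * \<phi>b1 p - cnj (\<phi> p) * F p * \<phi>1 p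
                                  - 2 * cnj (\<phi> p) * Fb1 p))"
    and B12_def: "B12 = (\<lambda>p. (F p)\<^sup>2 * (2 * of_real ((cmod (\<phi> p))\<^sup>2) * Fb1 p + F p * \<phi>1 p
                                  + \<phi> p * F p * \<phi>b1 p + 2 * \<phi> p * F1 p))"
    and B13_def: "B13 = (\<lambda>p. - cnj (\<phi> p) * (F p) ^ 3 * (\<phi>0 p - 4 * \<i> * \<phi> p))"
    and om_def: "om = fminus (fminus conn_std (fscale (\<lambda>p. inverse (F p)) (dfun F)))
                  (fscale (\<lambda>p. inverse (F p))
                     (fadd (fadd (fscale B11 theta1) (fscale B12 theta1bar)) (fscale B13 theta)))"
    and A_def: "A = (\<lambda>p. - (F p)\<^sup>2 * (\<phi>0 p - 4 * \<i> * \<phi> p))"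
begin

lemmas coefficient_defs = B11_def B12_def B13_def \<phi>1_def \<phi>b1_def F1_def Fb1_def \<phi>0_def

lemma phi_has_derivative: "p \<in> S3 \<Longrightarrow> (\<phi> has_derivative frechet_derivative \<phi> (at p)) (at p)"
  using phi_differentiable frechet_derivative_works by blast

lemma F_real: "cnj (F p) = F p"
  by (simp add: F_def)

lemma cmod_phi_sq_less_1: "p \<in> S3 \<Longrightarrow> (cmod (\<phi> p))\<^sup>2 < 1"
  using small by (simp add: abs_square_less_1)

lemma F_nonzero: "p \<in> S3 \<Longrightarrow> F p \<noteq> 0"
  using cmod_phi_sq_less_1[of p] by (simp add: F_def)

lemma F_squared_eq: "p \<in> S3 \<Longrightarrow> (F p)\<^sup>2 * (1 - \<phi> p * cnj (\<phi> p)) = 1"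
proof -
  assume p: "p \<in> S3"
  then have "((1 - (cmod (\<phi> p))\<^sup>2) powr (-1/2))\<^sup>2 * (1 - (cmod (\<phi> p))\<^sup>2) = 1"
    using powr_neg_half_squared[of "1 - (cmod (\<phi> p))\<^sup>2"] cmod_phi_sq_less_1[OF p] by simp
  then have "complex_of_real (((1 - (cmod (\<phi> p))\<^sup>2) powr (-1/2))\<^sup>2 * (1 - (cmod (\<phi> p))\<^sup>2)) = 1"
    by simp
  then show ?thesis by (simp add: F_def complex_norm_square[symmetric])
qed

lemma pairing_dfun_F:
  assumes "p \<in> S3"
  shows "pairing (dfun F p) v =
    (F p) ^ 3 / 2 * (cnj (\<phi> p) * pairing (dfun \<phi> p) v + \<phi> p * cnj (pairing (dfun \<phi> p) (vconj v)))"
  using dfun_eq_wirtinger_covec[OF has_derivative_inverse_sqrt_one_minus_cmod_sq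
      [OF phi_has_derivative[OF assms] small[OF assms]]]
    dfun_eq_wirtinger_covec[OF phi_has_derivative[OF assms]]
  by (cases v) (simp add: wirtinger_covec_def pairing_def vconj_def F_def field_simps)

lemma F_differentiable: "p \<in> S3 \<Longrightarrow> F differentiable (at p)"
  unfolding F_def
  using has_derivative_inverse_sqrt_one_minus_cmod_sq[OF phi_has_derivative small] by (rule differentiableI)

lemma pairing_dfun_cnj_phi_Z1bar:
  "(z1, z2) \<in> S3 \<Longrightarrow>
    pairing (dfun (\<lambda>p. cnj (\<phi> p)) (z1, z2)) (Z1bar (z1, z2)) = cnj (pairing (dfun \<phi> (z1, z2)) (Z1 (z1, z2)))"
  by (simp add: pairing_dfun_cnj[OF phi_has_derivative] vconj_frame)

lemma pairing_om: "pairing (om p) v = -2 * \<i> * pairing (theta p) v - inverse (F p) * pairing (dfun F p) v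
     - inverse (F p) * (B11 p * pairing (theta1 p) v + B12 p * pairing (theta1bar p) v + B13 p * pairing (theta p) v)"
  by (simp add: om_def conn_std_def pairing_fminus pairing_fscale pairing_fadd)

abbreviation structure_rhs :: form2 where
  "structure_rhs \<equiv> f2add (wedge vt1 om) (wedge theta (fscale A (fconj vt1)))"

lemma structure_equation_Z1_Z1bar:
  assumes p: "(z1, z2) \<in> S3"
  shows "extd vt1 (z1, z2) (Z1 (z1, z2)) (Z1bar (z1, z2)) = structure_rhs (z1, z2) (Z1 (z1, z2)) (Z1bar (z1, z2))"
  unfolding vt1_def structure_rhs_frame[OF S3_cnj_eq[OF p]]
    extd_deformed_coframe[OF F_differentiable[OF p] phi_differentiable[OF p]] pairing_om coframe_dual_frame[OF S3_cnj_eq[OF p]]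
    coefficient_defs vfield_eq_pairing pairing_dfun_cnj_phi_Z1bar[OF p]
    complex_norm_square
  using F_nonzero[OF p]
  apply (simp add: Z1_def Z1bar_def Treeb_def field_simps)
  using S3_cnj_eq[OF p] F_squared_eq[OF p] i_squared by algebra

lemma structure_equation_Z1_T:
  assumes p: "(z1, z2) \<in> S3"
  shows "extd vt1 (z1, z2) (Z1 (z1, z2)) (Treeb (z1, z2)) = structure_rhs (z1, z2) (Z1 (z1, z2)) (Treeb (z1, z2))"
  unfolding vt1_def structure_rhs_frame[OF S3_cnj_eq[OF p]]
    extd_deformed_coframe[OF F_differentiable[OF p] phi_differentiable[OF p]] pairing_om coframe_dual_frame[OF S3_cnj_eq[OF p]]
    coefficient_defs A_def vfield_eq_pairing pairing_dfun_cnj_phi_Z1bar[OF p]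
    complex_norm_square
  using F_nonzero[OF p]
  apply (simp add: Z1_def Z1bar_def Treeb_def F_real field_simps)
  using S3_cnj_eq[OF p] F_squared_eq[OF p] i_squared by algebra

lemma structure_equation_Z1bar_T:
  assumes p: "(z1, z2) \<in> S3"
  shows "extd vt1 (z1, z2) (Z1bar (z1, z2)) (Treeb (z1, z2)) = structure_rhs (z1, z2) (Z1bar (z1, z2)) (Treeb (z1, z2))"
  unfolding vt1_def structure_rhs_frame[OF S3_cnj_eq[OF p]]
    extd_deformed_coframe[OF F_differentiable[OF p] phi_differentiable[OF p]] pairing_om coframe_dual_frame[OF S3_cnj_eq[OF p]]
    coefficient_defs A_def vfield_eq_pairing pairing_dfun_cnj_phi_Z1bar[OF p]
    complex_norm_square
  using F_nonzero[OF p]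
  apply (simp add: Z1_def Z1bar_def Treeb_def F_real field_simps)
  using S3_cnj_eq[OF p] F_squared_eq[OF p] i_squared by algebra

lemma structure_equation: "eq2_S3 (extd vt1) structure_rhs"
  by (rule eq2_S3_frameI[OF alternating_bilinear_extd
        alternating_bilinear_f2add[OF alternating_bilinear_wedge alternating_bilinear_wedge]
        structure_equation_Z1_Z1bar structure_equation_Z1_T structure_equation_Z1bar_T])

lemma connection_skew_Z1:
  assumes p: "(z1, z2) \<in> S3"
  shows "pairing (om (z1, z2)) (Z1 (z1, z2)) + cnj (pairing (om (z1, z2)) (Z1bar (z1, z2))) = 0"
  unfolding pairing_om coframe_dual_frame[OF S3_cnj_eq[OF p]] pairing_dfun_F[OF p] vconj_frame
    coefficient_defs vfield_eq_pairing pairing_dfun_cnj_phi_Z1bar[OF p]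
    complex_norm_square
  using F_nonzero[OF p]
  apply (simp add: Z1_def Z1bar_def Treeb_def F_real field_simps)
  using S3_cnj_eq[OF p] F_squared_eq[OF p] i_squared by algebra

lemma connection_skew_T:
  assumes p: "(z1, z2) \<in> S3"
  shows "pairing (om (z1, z2)) (Treeb (z1, z2)) + cnj (pairing (om (z1, z2)) (Treeb (z1, z2))) = 0"
  unfolding pairing_om coframe_dual_frame[OF S3_cnj_eq[OF p]] pairing_dfun_F[OF p] vconj_frame
    coefficient_defs vfield_eq_pairing pairing_dfun_cnj_phi_Z1bar[OF p]
    complex_norm_square
  using F_nonzero[OF p] by (simp add: Z1_def Z1bar_def Treeb_def F_real field_simps)

lemma connection_skew: "eq1_S3 (fadd om (fconj om)) (\<lambda>_. (0, 0, 0, 0))"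
proof (rule eq1_S3_frameI)
  fix z1 z2 E assume p: "(z1, z2) \<in> S3" and "E \<in> {Z1 (z1, z2), Z1bar (z1, z2), Treeb (z1, z2)}"
  moreover have "pairing (om (z1, z2)) (Z1bar (z1, z2)) + cnj (pairing (om (z1, z2)) (Z1 (z1, z2))) = 0"
    using arg_cong[OF connection_skew_Z1[OF p], of cnj] by (simp add: add.commute)
  ultimately show "pairing (fadd om (fconj om) (z1, z2)) E = pairing (0, 0, 0, 0) E"
    using connection_skew_Z1[OF p] connection_skew_T[OF p]
    by (auto simp: pairing_fadd pairing_fconj vconj_frame pairing_zero)
qed

lemma is_conn_torsion: "is_conn_torsion vt1 om A"
  unfolding is_conn_torsion_def using structure_equation connection_skew ..

end

theorem corollary4p2:
  fixes \<phi> :: "pt \<Rightarrow> complex" and U :: "pt set"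
  assumes U_open: "open U" and U_S3: "S3 \<subseteq> U"
    and smooth: "smooth_on U \<phi>"
    and small: "\<forall>p\<in>S3. cmod (\<phi> p) < 1"
  defines "F \<equiv> \<lambda>p. complex_of_real ((1 - (cmod (\<phi> p))\<^sup>2) powr (-1/2))"
  defines "vt1 \<equiv> fscale F (fminus theta1 (fscale \<phi> theta1bar))"
  defines "\<phi>1 \<equiv> vfield Z1 \<phi>" and "\<phi>b1 \<equiv> vfield Z1bar (\<lambda>p. cnj (\<phi> p))"
  defines "F1 \<equiv> vfield Z1 F" and "Fb1 \<equiv> vfield Z1bar F" and "\<phi>0 \<equiv> vfield Treeb \<phi>"
  defines "B11 \<equiv> \<lambda>p. (F p)\<^sup>2 * (- 2 * F1 p - F p * \<phi>b1 p - cnj (\<phi> p) * F p * \<phi>1 p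
                                  - 2 * cnj (\<phi> p) * Fb1 p)"
  defines "B12 \<equiv> \<lambda>p. (F p)\<^sup>2 * (2 * of_real ((cmod (\<phi> p))\<^sup>2) * Fb1 p + F p * \<phi>1 p
                                  + \<phi> p * F p * \<phi>b1 p + 2 * \<phi> p * F1 p)"
  defines "B13 \<equiv> \<lambda>p. - cnj (\<phi> p) * (F p) ^ 3 * (\<phi>0 p - 4 * \<i> * \<phi> p)"
  defines "om \<equiv> fminus (fminus conn_std (fscale (\<lambda>p. inverse (F p)) (dfun F)))
                  (fscale (\<lambda>p. inverse (F p))
                     (fadd (fadd (fscale B11 theta1) (fscale B12 theta1bar)) (fscale B13 theta)))"
  defines "A \<equiv> \<lambda>p. - (F p)\<^sup>2 * (\<phi>0 p - 4 * \<i> * \<phi> p)"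
  shows "is_conn_torsion vt1 om A \<and>
         (\<forall>om' A'. is_conn_torsion vt1 om' A' \<longrightarrow> eq1_S3 om' om \<and> (\<forall>p\<in>S3. A' p = A p))"
proof -
  have "\<phi> differentiable (at p)" if "p \<in> S3" for p
    using smooth_on_has_derivative[OF smooth U_open] U_S3 that by (blast intro: differentiableI)
  then interpret deformed: deformed_structure \<phi> F \<phi>1 \<phi>b1 F1 Fb1 \<phi>0 B11 B12 B13 A vt1 om
    using small by unfold_locales (simp_all add: F_def vt1_def \<phi>1_def \<phi>b1_def F1_def Fb1_def \<phi>0_def
        B11_def B12_def B13_def om_def A_def)
  have "eq1_S3 om' om \<and> (\<forall>p\<in>S3. A' p = A p)" if "is_conn_torsion vt1 om' A'" for om' A'
    using is_conn_torsion_unique[OF deformed.F_real deformed.F_nonzero deformed.small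
        deformed.is_conn_torsion[unfolded vt1_def] that[unfolded vt1_def]] .
  with deformed.is_conn_torsion show ?thesis by blast
qed

end
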